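(* Let $d,N\in\mathbb{N}$, let $k:\mathbb{R}^d\times\mathbb{R}^d\rightarrow\mathbb{R}$ be a continuous covariance kernel, and let $\{(\bm{x}^{(n)},y^{(n)})\}_{n=1}^N\subset\mathbb{R}^d\times\mathbb{R}$ be training data. Let $\sigma_n^2>0$. Define $\bm{K}\in\mathbb{R}^{N\times N}$ by $K_{ij}=k(\bm{x}^{(i)},\bm{x}^{(j)})$, $\bm{y}=(y^{(1)},\ldots,y^{(N)})^T$, $\bm{\lambda}=(\bm{K}+\sigma_n^2\bm{I}_N)^{-1}\bm{y}$, $k_i(\bm{z})=k(\bm{x}^{(i)},\bm{z})$ for $i=1,\ldots,N$, and consider the Gaussian process posterior mean function $\mu(\bm{z})=\sum_{i=1}^N \lambda_i k_i(\bm{z})$. Let $\bm{x}\in\mathbb{R}^d$ and $\bm{b}\in\mathbb{R}^d$ with positive entries, and let $H=\{\bm{z}\in\mathbb{R}^d: |z_j-x_j|\leq b_j \text{ for all } j=1,\ldots,d\}$ be the hyperrectangle with center $\bm{x}$ and edge widths $2\bm{b}$. Assume each $k_i$ is differentiable on $H$, and for each $i\in\{1,\ldots,N\}$ and $j\in\{1,\ldots,d\}$ let $\bm{L}_{k,i}^{\partial j}=\begin{bmatrix}u_{ij}\\ \ell_{ij}\end{bmatrix}\in\mathbb{R}^2$ be a vector of partial derivative bounds, i.e. $\ell_{ij}\leq \frac{\partial}{\partial z_j}k_i(\bm{z})\leq u_{ij}$ for all $\bm{z}\in H$ (first entry an upper bound, second entry a lower bound). Define $$\bm{R}(\lambda_i)=\begin{cases}\bm{I}_2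 & \lambda_i>0,\\ \begin{bmatrix}0&1\\1&0\end{bmatrix} & \lambda_i\leq 0,\end{cases}$$ and, for each $j$, the vector $\bm{v}_j=\sum_{i=1}^N \bm{R}(\lambda_i)\lambda_i\bm{L}_{k,i}^{\partial j}\in\mathbb{R}^2$. Then $$L_{\mu}(\bm{x},\bm{b})=\sqrt{\sum_{j=1}^d \max\left\{ (v_{j,1})^2,(v_{j,2})^2 \right\}}$$ is a local Lipschitz constant of $\mu$ on $H$, i.e. $|\mu(\bm{z})-\mu(\bm{z}')|\leq L_{\mu}(\bm{x},\bm{b})\,\|\bm{z}-\bm{z}'\|$ for all $\bm{z},\bm{z}'\in H$, where $\|\cdot\|$ is the Euclidean norm.
   Context: $\bm{I}_n$ denotes the $n\times n$ identity matrix and $\|\cdot\|$ the Euclidean norm. In the paper's notation the constant is written $\sqrt{\sum_{j=1}^d \max\{ (\sum_{i=1}^N\bm{R}(\lambda_i)\lambda_i\bm{L}_{k,i}^{\partial j})^2\}}$, where the square is taken entrywise on the 2-vector and the maximum is over its two entries. *)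

theory Defs
  imports "HOL-Analysis.Analysis"
begin

definition covariance_kernel :: "('a \<Rightarrow> 'a \<Rightarrow> real) \<Rightarrow> bool" where
  "covariance_kernel k \<longleftrightarrow> (\<forall>a b. k a b = k b a) \<and>
     (\<forall>(xs :: 'a list) (c :: real list). length c = length xs \<longrightarrow>
        (\<Sum>i<length xs. \<Sum>j<length xs. c!i * c!j * k (xs!i) (xs!j)) \<ge> 0)"

definition gram :: "('a \<Rightarrow> 'a \<Rightarrow> real) \<Rightarrow> ('n::finite \<Rightarrow> 'a) \<Rightarrow> real^'n^'n" where
  "gram k X = (\<chi> i j. k (X i) (X j))"

definition gp_weights :: "('a \<Rightarrow> 'a \<Rightarrow> real) \<Rightarrow> ('n::finite \<Rightarrow> 'a) \<Rightarrow> real^'n \<Rightarrow> real \<Rightarrow> real^'n" where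
  "gp_weights k X y s2 = matrix_inv (gram k X + s2 *\<^sub>R mat 1) *v y"

definition gp_mean :: "('a \<Rightarrow> 'a \<Rightarrow> real) \<Rightarrow> ('n::finite \<Rightarrow> 'a) \<Rightarrow> real^'n \<Rightarrow> real \<Rightarrow> 'a \<Rightarrow> real" where
  "gp_mean k X y s2 z = (\<Sum>i\<in>UNIV. gp_weights k X y s2 $ i * k (X i) z)"

definition hrect :: "real^'d \<Rightarrow> real^'d \<Rightarrow> (real^'d) set" where
  "hrect x b = {z. \<forall>j. \<bar>z $ j - x $ j\<bar> \<le> b $ j}"

definition partial_within :: "(real^'d \<Rightarrow> real) \<Rightarrow> 'd \<Rightarrow> real^'d \<Rightarrow> (real^'d) set \<Rightarrow> real" where
  "partial_within f j z S = frechet_derivative f (at z within S) (axis j 1)"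

definition Rmat :: "real \<Rightarrow> real^2^2" where
  "Rmat l = (if l > 0 then mat 1 else (\<chi> r c. if r = c then 0 else 1))"

definition vvec :: "real^'n \<Rightarrow> ('n::finite \<Rightarrow> 'd \<Rightarrow> real^2) \<Rightarrow> 'd \<Rightarrow> real^2" where
  "vvec lam Lb j = (\<Sum>i\<in>UNIV. Rmat (lam $ i) *v (lam $ i *\<^sub>R Lb i j))"

definition lip_const :: "real^'n \<Rightarrow> ('n::finite \<Rightarrow> 'd::finite \<Rightarrow> real^2) \<Rightarrow> real" where
  "lip_const lam Lb = sqrt (\<Sum>j\<in>UNIV. max ((vvec lam Lb j $ 1)\<^sup>2) ((vvec lam Lb j $ 2)\<^sup>2))"

end

theory Submission
  imports Defs
begin

text \<open>
  The posterior mean is the weighted sum \<open>\<mu> = \<Sum>\<^sub>i \<lambda>\<^sub>i k\<^sub>i\<close>, so its \<open>j\<close>-th partial derivative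
  is \<open>\<Sum>\<^sub>i \<lambda>\<^sub>i \<partial>\<^sub>j k\<^sub>i\<close>. Bounding each term from above by \<open>\<lambda>\<^sub>i u\<^sub>i\<^sub>j\<close> or \<open>\<lambda>\<^sub>i \<ell>\<^sub>i\<^sub>j\<close> according
  to the sign of \<open>\<lambda>\<^sub>i\<close> (and from below by the other one) is exactly what the swap \<open>R(\<lambda>\<^sub>i)\<close>
  encodes, giving \<open>v\<^sub>j\<^sub>,\<^sub>2 \<le> \<partial>\<^sub>j \<mu> \<le> v\<^sub>j\<^sub>,\<^sub>1\<close> on \<open>H\<close>. Hence \<open>(\<partial>\<^sub>j \<mu>)\<^sup>2 \<le> max (v\<^sub>j\<^sub>,\<^sub>1\<^sup>2) (v\<^sub>j\<^sub>,\<^sub>2\<^sup>2)\<close>, the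
  gradient of \<open>\<mu>\<close> has norm at most \<open>L\<^sub>\<mu>\<close> throughout \<open>H\<close>, and the mean value inequality on
  the convex box \<open>H\<close> yields the Lipschitz bound.
\<close>

lemma hrect_eq_cbox: "hrect x b = cbox (x - b) (x + b)"
  by (auto simp: hrect_def mem_box_cart abs_le_iff; smt (verit))

lemma convex_hrect: "convex (hrect x b)"
  unfolding hrect_eq_cbox by (rule convex_box)

lemma Rmat_mult_vec_nth_1: "(Rmat l *v w) $ 1 = (if l > 0 then w $ 1 else w $ 2)"
  by (simp add: Rmat_def matrix_vector_mult_def sum_2 mat_def)

lemma Rmat_mult_vec_nth_2: "(Rmat l *v w) $ 2 = (if l > 0 then w $ 2 else w $ 1)"
  by (simp add: Rmat_def matrix_vector_mult_def sum_2 mat_def)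

lemma Rmat_scaled_bounds:
  assumes "B $ 2 \<le> a" "a \<le> B $ 1"
  shows "(Rmat l *v (l *\<^sub>R B)) $ 2 \<le> l * a \<and> l * a \<le> (Rmat l *v (l *\<^sub>R B)) $ 1"
  using assms by (auto simp: Rmat_mult_vec_nth_1 Rmat_mult_vec_nth_2
      intro: mult_left_mono mult_left_mono_neg)

lemma vvec_bounds:
  assumes "\<And>i. Lb i j $ 2 \<le> a i \<and> a i \<le> Lb i j $ 1"
  shows "vvec lam Lb j $ 2 \<le> (\<Sum>i\<in>UNIV. lam $ i * a i)
    \<and> (\<Sum>i\<in>UNIV. lam $ i * a i) \<le> vvec lam Lb j $ 1"
  using Rmat_scaled_bounds[OF conjunct1[OF assms] conjunct2[OF assms]]
  unfolding vvec_def sum_component by (auto intro: sum_mono)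

lemma square_le_max_squares:
  fixes a u l :: real
  assumes "l \<le> a" "a \<le> u"
  shows "a\<^sup>2 \<le> max (u\<^sup>2) (l\<^sup>2)"
proof (cases "a \<ge> 0")
  case True
  with assms have "a\<^sup>2 \<le> u\<^sup>2" by (simp flip: abs_le_square_iff)
  then show ?thesis by simp
next
  case False
  with assms have "a\<^sup>2 \<le> l\<^sup>2" by (simp flip: abs_le_square_iff)
  then show ?thesis by simp
qed

lemma norm_le_lip_const:
  assumes "\<And>j. vvec lam Lb j $ 2 \<le> D $ j \<and> D $ j \<le> vvec lam Lb j $ 1"
  shows "norm D \<le> lip_const lam Lb"
proof -
  have "(\<Sum>j\<in>UNIV. (D $ j)\<^sup>2) \<le> (\<Sum>j\<in>UNIV. max ((vvec lam Lb j $ 1)\<^sup>2) ((vvec lam Lb j $ 2)\<^sup>2))"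
    using assms by (intro sum_mono square_le_max_squares) auto
  then show ?thesis
    unfolding lip_const_def norm_vec_def L2_set_def by (simp add: real_sqrt_le_mono)
qed

lemma linear_functional_eq_inner_cart:
  fixes F :: "real^'d \<Rightarrow> real"
  assumes "linear F"
  shows "F h = (\<chi> j. F (axis j 1)) \<bullet> h"
proof -
  have "F h = F (\<Sum>j\<in>UNIV. h $ j *\<^sub>R axis j 1)"
    using basis_expansion[of h] by (simp add: scalar_mult_eq_scaleR)
  also have "\<dots> = (\<Sum>j\<in>UNIV. h $ j * F (axis j 1))"
    using assms by (simp add: linear_sum linear_scale)
  finally show ?thesis by (simp add: inner_vec_def mult.commute)
qed

lemma onorm_linear_functional_le:
  fixes F :: "real^'d \<Rightarrow> real"
  assumes "linear F"
  shows "onorm F \<le> norm (\<chi> j. F (axis j 1))"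
proof (rule onorm_le)
  fix h
  show "norm (F h) \<le> norm (\<chi> j. F (axis j 1)) * norm h"
    unfolding linear_functional_eq_inner_cart[OF assms, of h] real_norm_def
    by (rule Cauchy_Schwarz_ineq2)
qed

lemma lipschitz_bound_from_gradient:
  fixes f :: "real^'d \<Rightarrow> real"
  assumes "convex S"
    and der: "\<And>w. w \<in> S \<Longrightarrow> (f has_derivative f' w) (at w within S)"
    and grad: "\<And>w. w \<in> S \<Longrightarrow> norm (\<chi> j. f' w (axis j 1)) \<le> L"
    and "z \<in> S" "z' \<in> S"
  shows "\<bar>f z - f z'\<bar> \<le> L * norm (z - z')"
proof -
  have "onorm (f' w) \<le> L" if "w \<in> S" for w
    using onorm_linear_functional_le[OF has_derivative_linear[OF der[OF that]]] grad[OF that]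
    by linarith
  then show ?thesis
    using differentiable_bound[OF assms(1) der] assms(4,5) by simp
qed

lemma kernel_combination_lipschitz_on_convex:
  fixes k :: "real^'d \<Rightarrow> real^'d \<Rightarrow> real"
    and X :: "'n::finite \<Rightarrow> real^'d"
  assumes "convex S"
    and diff: "\<forall>i. k (X i) differentiable_on S"
    and bounds: "\<forall>i j z. z \<in> S \<longrightarrow>
        Lb i j $ 2 \<le> partial_within (k (X i)) j z S \<and> partial_within (k (X i)) j z S \<le> Lb i j $ 1"
    and "z \<in> S" "z' \<in> S"
  shows "\<bar>(\<Sum>i\<in>UNIV. lam $ i * k (X i) z) - (\<Sum>i\<in>UNIV. lam $ i * k (X i) z')\<bar>
    \<le> lip_const lam Lb * norm (z - z')"
proof (rule lipschitz_bound_from_gradient[OF assms(1) _ _ assms(4,5)])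
  let ?F = "\<lambda>i w. frechet_derivative (k (X i)) (at w within S)"
  fix w assume w: "w \<in> S"
  show "((\<lambda>z. \<Sum>i\<in>UNIV. lam $ i * k (X i) z)
      has_derivative (\<lambda>h. \<Sum>i\<in>UNIV. lam $ i * ?F i w h)) (at w within S)"
    using diff w unfolding differentiable_on_def
    by (intro has_derivative_sum has_derivative_mult_right) (metis frechet_derivative_works)
  have "vvec lam Lb j $ 2 \<le> (\<Sum>i\<in>UNIV. lam $ i * partial_within (k (X i)) j w S)
      \<and> (\<Sum>i\<in>UNIV. lam $ i * partial_within (k (X i)) j w S) \<le> vvec lam Lb j $ 1" for j
    using bounds w by (intro vvec_bounds) blast
  then show "norm (\<chi> j. \<Sum>i\<in>UNIV. lam $ i * ?F i w (axis j 1)) \<le> lip_const lam Lb"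
    by (intro norm_le_lip_const) (simp add: partial_within_def)
qed

text \<open>
  The bound holds for any weight vector.
\<close>

theorem theorem2:
  fixes k :: "real^'d \<Rightarrow> real^'d \<Rightarrow> real"
    and X :: "'n::finite \<Rightarrow> real^'d"
    and y :: "real^'n"
    and s2 :: real
    and x b :: "real^'d"
    and Lb :: "'n \<Rightarrow> 'd \<Rightarrow> real^2"
  assumes cont: "continuous_on UNIV (\<lambda>p. k (fst p) (snd p))"
    and cov: "covariance_kernel k"
    and s2_pos: "s2 > 0"
    and b_pos: "\<forall>j. b $ j > 0"
    and diff: "\<forall>i. k (X i) differentiable_on hrect x b"
    and bounds: "\<forall>i j z. z \<in> hrect x b \<longrightarrow>
        Lb i j $ 2 \<le> partial_within (k (X i)) j z (hrect x b) \<and>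
        partial_within (k (X i)) j z (hrect x b) \<le> Lb i j $ 1"
  shows "\<forall>z \<in> hrect x b. \<forall>z' \<in> hrect x b.
    \<bar>gp_mean k X y s2 z - gp_mean k X y s2 z'\<bar>
      \<le> lip_const (gp_weights k X y s2) Lb * norm (z - z')"
  unfolding gp_mean_def using kernel_combination_lipschitz_on_convex[OF convex_hrect diff bounds] by blast

end
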